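(* Let $\lambda\in\mathbf R$, $\mu>0$, and let $\psi\in H(\mathbf R)$ satisfy $1-\psi(x)\sim Ce^{\nu x}$ as $x\to-\infty$ for some $C>0,\nu>0$. Let $u$ be the weak solution of $u_t=-\lambda u_x+\mu(u^2-u)$, $u(0,\cdot)=\psi$, namely $u(t,x)=\frac{\psi(x-\lambda t)e^{-\mu t}}{1-\psi(x-\lambda t)+\psi(x-\lambda t)e^{-\mu t}}$. Put $v=\lambda-\mu/\nu$ and $w_v(x)=\big(1+\exp(\frac{\mu}{\lambda-v}x)\big)^{-1}$. Then there exists $x_0\in\mathbf R$ such that for every $x\in\mathbf R$, $$|u(t,x)-w_v(x-x_0-vt)|\to0\quad(t\to\infty).$$
   Context: $H(\mathbf R)$ is the set of nonincreasing right-continuous functions $h:\mathbf R\to[0,1]$ with $h(-\infty)=1$, $h(+\infty)=0$. *)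

theory Defs
  imports "HOL-Analysis.Analysis" "HOL-Library.Landau_Symbols"
begin

definition H_R :: "(real \<Rightarrow> real) set" where
  "H_R = {h. antimono h
            \<and> (\<forall>x. continuous (at_right x) h)
            \<and> (\<forall>x. 0 \<le> h x \<and> h x \<le> 1)
            \<and> (h \<longlongrightarrow> 1) at_bot
            \<and> (h \<longlongrightarrow> 0) at_top}"

definition weak_sol :: "real \<Rightarrow> real \<Rightarrow> (real \<Rightarrow> real) \<Rightarrow> real \<Rightarrow> real \<Rightarrow> real" where
  "weak_sol lam mu psi t x =
     psi (x - lam * t) * exp (- mu * t) /
     (1 - psi (x - lam * t) + psi (x - lam * t) * exp (- mu * t))"

definition wave :: "real \<Rightarrow> real \<Rightarrow> real \<Rightarrow> real \<Rightarrow> real" where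
  "wave lam mu v x = 1 / (1 + exp (mu / (lam - v) * x))"

end

theory Submission
  imports Defs "HOL-Real_Asymp.Real_Asymp"
begin

text \<open>With \<open>y = x - \<lambda>t\<close>, \<open>p = \<psi>(y)\<close>, \<open>E = exp(-\<mu>t)\<close> and \<open>c = C exp(\<nu>y)\<close> the solution
  is \<open>u = pE/(1 - p + pE)\<close>, and for the shift \<open>x\<^sub>0 = -(ln C)/\<nu>\<close> the wave is exactly
  \<open>E/(E + c)\<close>. If \<open>\<lambda> > 0\<close> then \<open>y \<rightarrow> -\<infinity>\<close>, so \<open>p \<rightarrow> 1\<close> and \<open>r = (1 - p)/c \<rightarrow> 1\<close>, and the
  difference of the two expressions is at most \<open>|p - r|\<close>. If \<open>\<lambda> \<le> 0\<close> then \<open>p \<le> \<psi>(x) < 1\<close>, so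
  \<open>u \<le> E/(1 - \<psi>(x)) \<rightarrow> 0\<close>, while the wave travels with speed \<open>v < 0\<close> and therefore also
  tends to \<open>0\<close> at the fixed point \<open>x\<close>.\<close>

lemma abs_logistic_diff_le:
  fixes p r c E :: real
  assumes "1/2 \<le> p" "p \<le> 1" "1/2 \<le> r" "c > 0" "E > 0" "1 - p = r * c"
  shows "\<bar>p * E / (1 - p + p * E) - 1 / (1 + c / E)\<bar> \<le> \<bar>p - r\<bar>"
proof -
  have den_pos: "r * c + p * E > 0" "E + c > 0" using assms by (simp_all add: add_pos_pos)
  have "r * c \<ge> c / 2" "p * E \<ge> E / 2" using assms mult_right_mono by fastforce+
  then have den_ge: "r * c + p * E \<ge> (c + E) / 2" by simp
  have "p * E / (1 - p + p * E) - 1 / (1 + c / E) = p * E / (r * c + p * E) - E / (E + c)"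
    using assms by (simp add: field_simps)
  also have "\<dots> = E * c * (p - r) / ((r * c + p * E) * (E + c))"
    using den_pos by (simp add: diff_frac_eq algebra_simps)
  finally have "\<bar>p * E / (1 - p + p * E) - 1 / (1 + c / E)\<bar>
      = E * c * \<bar>p - r\<bar> / ((r * c + p * E) * (E + c))"
    using den_pos assms by (simp add: abs_mult abs_divide)
  also have "\<dots> \<le> E * c * \<bar>p - r\<bar> / ((c + E) / 2 * (E + c))"
    using den_ge den_pos assms by (intro divide_left_mono mult_right_mono mult_pos_pos) auto
  also have "\<dots> = 2 * (E * c) / ((c + E) * (E + c)) * \<bar>p - r\<bar>" by simp
  also have "\<dots> \<le> 1 * \<bar>p - r\<bar>"
  proof (rule mult_right_mono)
    have "2 * (E * c) \<le> (c + E) * (E + c)" by (simp add: algebra_simps)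
    then show "2 * (E * c) / ((c + E) * (E + c)) \<le> 1" using den_pos by (simp add: divide_le_eq)
  qed simp
  finally show ?thesis by simp
qed

lemma tendsto_logistic_diff_0:
  fixes p c E :: "'a \<Rightarrow> real"
  assumes "(p \<longlongrightarrow> 1) F" and "((\<lambda>t. (1 - p t) / c t) \<longlongrightarrow> 1) F"
    and "\<And>t. p t \<le> 1" "\<And>t. c t > 0" "\<And>t. E t > 0"
  shows "((\<lambda>t. \<bar>p t * E t / (1 - p t + p t * E t) - 1 / (1 + c t / E t)\<bar>) \<longlongrightarrow> 0) F"
proof (rule Lim_null_comparison)
  define r where "r t = (1 - p t) / c t" for t
  have "eventually (\<lambda>t. p t > 1/2) F" using assms(1) by (rule order_tendstoD) simp
  moreover have "eventually (\<lambda>t. r t > 1/2) F"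
    using assms(2) unfolding r_def by (rule order_tendstoD) simp
  ultimately show "eventually (\<lambda>t. norm \<bar>p t * E t / (1 - p t + p t * E t) - 1 / (1 + c t / E t)\<bar>
      \<le> \<bar>p t - r t\<bar>) F"
  proof eventually_elim
    case (elim t)
    have "1 - p t = r t * c t" unfolding r_def using assms(4)[of t] by simp
    then show ?case using abs_logistic_diff_le[of "p t" "r t" "c t" "E t"] elim assms(3-5) by simp
  qed
  have "((\<lambda>t. \<bar>p t - r t\<bar>) \<longlongrightarrow> \<bar>1 - 1\<bar>) F"
    unfolding r_def by (intro tendsto_intros assms(1,2))
  then show "((\<lambda>t. \<bar>p t - r t\<bar>) \<longlongrightarrow> 0) F" by simp
qed

lemma antimono_less_one_if_asymp_equiv:
  fixes h g :: "real \<Rightarrow> real"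
  assumes "antimono h" "\<And>x. h x \<le> 1"
    and "(\<lambda>x. 1 - h x) \<sim>[at_bot] g" "eventually (\<lambda>x. g x \<noteq> 0) at_bot"
  shows "h y < 1"
proof -
  have "eventually (\<lambda>x. h x \<noteq> 1) at_bot"
    using asymp_equiv_eventually_zeros[OF assms(3)] assms(4) by eventually_elim simp
  then obtain N where N: "\<And>x. x \<le> N \<Longrightarrow> h x \<noteq> 1" by (auto simp: eventually_at_bot_linorder)
  have "h y \<le> h (min y N)" using assms(1) by (simp add: antimonoD)
  moreover have "h (min y N) < 1" using N[of "min y N"] assms(2)[of "min y N"] by simp
  ultimately show ?thesis by simp
qed

lemma wave_shifted_eq:
  fixes lam mu nu C x t :: real
  assumes "mu \<noteq> 0" "nu \<noteq> 0" "C > 0"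
  shows "wave lam mu (lam - mu / nu) (x - (- ln C / nu) - (lam - mu / nu) * t)
       = 1 / (1 + C * exp (nu * (x - lam * t)) / exp (- mu * t))"
proof -
  have "nu * (x - (- ln C / nu) - (lam - mu / nu) * t) = ln C + nu * (x - lam * t) + mu * t"
    using assms by (simp add: field_simps)
  then have "exp (nu * (x - (- ln C / nu) - (lam - mu / nu) * t))
      = C * exp (nu * (x - lam * t)) / exp (- mu * t)"
    using assms by (simp add: exp_add exp_minus divide_inverse)
  moreover have "mu / (lam - (lam - mu / nu)) = nu" using assms by simp
  ultimately show ?thesis unfolding wave_def by simp
qed

lemma wave_at_point_tendsto_0:
  assumes "mu / (lam - v) > 0" "v < 0"
  shows "((\<lambda>t. wave lam mu v (x - v * t)) \<longlongrightarrow> 0) at_top"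
proof -
  define k where "k = mu / (lam - v)"
  have "k > 0" using assms(1) unfolding k_def .
  then have "((\<lambda>z. 1 / (1 + exp (k * z))) \<longlongrightarrow> 0) at_top" by real_asymp
  moreover have "filterlim (\<lambda>t. x - v * t) at_top at_top" using assms(2) by real_asymp
  ultimately show ?thesis unfolding wave_def k_def by (rule filterlim_compose)
qed

lemma weak_sol_tendsto_0:
  assumes "lam \<le> 0" "mu > 0" "antimono psi" "\<And>y. 0 \<le> psi y" "psi x < 1"
  shows "((\<lambda>t. weak_sol lam mu psi t x) \<longlongrightarrow> 0) at_top"
proof (rule tendsto_sandwich[where f = "\<lambda>_. 0" and h = "\<lambda>t. exp (- mu * t) / (1 - psi x)"])
  have "eventually (\<lambda>t. 0 \<le> weak_sol lam mu psi t x \<and>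
      weak_sol lam mu psi t x \<le> exp (- mu * t) / (1 - psi x)) at_top"
    using eventually_ge_at_top[of 0]
  proof eventually_elim
    case (elim t)
    let ?p = "psi (x - lam * t)" and ?E = "exp (- mu * t)"
    have "x \<le> x - lam * t" using elim assms(1) by (simp add: mult_nonpos_nonneg)
    then have p_le: "?p \<le> psi x" by (rule antimonoD[OF assms(3)])
    have p_ge: "0 \<le> ?p" using assms(4) .
    have "?p * ?E / (1 - ?p + ?p * ?E) \<le> ?p * ?E / (1 - ?p)"
      using p_le p_ge assms(5) by (intro divide_left_mono mult_pos_pos add_pos_nonneg) auto
    also have "\<dots> \<le> ?E / (1 - ?p)"
      using p_le p_ge assms(5) by (intro divide_right_mono) (auto simp: mult_left_le_one_le)
    also have "\<dots> \<le> ?E / (1 - psi x)"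
      using p_le assms(5) by (intro divide_left_mono) auto
    finally show ?case
      using p_le p_ge assms(5) unfolding weak_sol_def by (auto intro!: divide_nonneg_pos add_pos_nonneg)
  qed
  then show "eventually (\<lambda>t. 0 \<le> weak_sol lam mu psi t x) at_top"
    and "eventually (\<lambda>t. weak_sol lam mu psi t x \<le> exp (- mu * t) / (1 - psi x)) at_top"
    by (auto elim: eventually_mono)
  have "((\<lambda>t. exp (- mu * t)) \<longlongrightarrow> 0) at_top" using assms(2) by real_asymp
  then show "((\<lambda>t. exp (- mu * t) / (1 - psi x)) \<longlongrightarrow> 0) at_top" by (rule tendsto_divide_zero)
qed simp

lemma weak_sol_minus_wave_tendsto_0_pos_speed:
  fixes lam mu C nu x :: real and psi :: "real \<Rightarrow> real"
  assumes "lam > 0" "mu \<noteq> 0" "nu \<noteq> 0" "C > 0"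
    and "\<And>y. psi y \<le> 1" "(psi \<longlongrightarrow> 1) at_bot"
    and "(\<lambda>y. 1 - psi y) \<sim>[at_bot] (\<lambda>y. C * exp (nu * y))"
  shows "((\<lambda>t. \<bar>weak_sol lam mu psi t x
      - wave lam mu (lam - mu / nu) (x - (- ln C / nu) - (lam - mu / nu) * t)\<bar>) \<longlongrightarrow> 0) at_top"
proof -
  have y: "filterlim (\<lambda>t. x - lam * t) at_bot at_top" using assms(1) by real_asymp
  have ratio: "((\<lambda>y. (1 - psi y) / (C * exp (nu * y))) \<longlongrightarrow> 1) at_bot"
    using asymp_equivD[OF assms(7)] assms(4) by simp
  have "((\<lambda>t. \<bar>psi (x - lam * t) * exp (- mu * t)
      / (1 - psi (x - lam * t) + psi (x - lam * t) * exp (- mu * t))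
      - 1 / (1 + C * exp (nu * (x - lam * t)) / exp (- mu * t))\<bar>) \<longlongrightarrow> 0) at_top"
    using filterlim_compose[OF assms(6) y] filterlim_compose[OF ratio y] assms(4,5)
    by (intro tendsto_logistic_diff_0) (simp_all add: o_def)
  moreover have "wave lam mu (lam - mu / nu) (x - (- ln C / nu) - (lam - mu / nu) * t)
      = 1 / (1 + C * exp (nu * (x - lam * t)) / exp (- mu * t))" for t
    using wave_shifted_eq assms(2-4) by simp
  ultimately show ?thesis unfolding weak_sol_def by simp
qed

theorem mainTheorem11:
  fixes lam mu C nu :: real and psi :: "real \<Rightarrow> real"
  assumes "mu > 0" and "psi \<in> H_R" and "C > 0" and "nu > 0"
    and "(\<lambda>x. 1 - psi x) \<sim>[at_bot] (\<lambda>x. C * exp (nu * x))"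
  shows "\<exists>x0::real. \<forall>x::real.
     ((\<lambda>t. \<bar>weak_sol lam mu psi t x - wave lam mu (lam - mu / nu) (x - x0 - (lam - mu / nu) * t)\<bar>)
        \<longlongrightarrow> 0) at_top"
proof (intro exI allI)
  fix x :: real
  have psi: "antimono psi" "\<And>y. 0 \<le> psi y" "\<And>y. psi y \<le> 1" "(psi \<longlongrightarrow> 1) at_bot"
    using assms(2) unfolding H_R_def by auto
  show "((\<lambda>t. \<bar>weak_sol lam mu psi t x
      - wave lam mu (lam - mu / nu) (x - (- ln C / nu) - (lam - mu / nu) * t)\<bar>) \<longlongrightarrow> 0) at_top"
  proof (cases "lam > 0")
    case True
    then show ?thesis using weak_sol_minus_wave_tendsto_0_pos_speed psi(3,4) assms by simp
  next
    case False
    have "psi x < 1"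
      using antimono_less_one_if_asymp_equiv[OF psi(1,3) assms(5)] assms(3) by simp
    then have sol: "((\<lambda>t. weak_sol lam mu psi t x) \<longlongrightarrow> 0) at_top"
      using weak_sol_tendsto_0 False psi(1,2) assms(1) by simp
    have "lam - mu / nu < 0" using False divide_pos_pos[OF assms(1,4)] by linarith
    then have wave: "((\<lambda>t. wave lam mu (lam - mu / nu) (x - (- ln C / nu) - (lam - mu / nu) * t))
        \<longlongrightarrow> 0) at_top"
      using assms(1,4) by (intro wave_at_point_tendsto_0) simp_all
    show ?thesis using tendsto_rabs_zero[OF tendsto_diff[OF sol wave, simplified]] by simp
  qed
qed

end
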